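(* Let $X$ be a Banach space, $D\subset X$ a closed, bounded and convex set, and $\tau$ a locally convex topology on $D$ containing the relative weak topology of $D$. Suppose $D$ is $\tau$-strongly regular. Let $C$ be a nonempty convex subset of $D$. Then for every $\varepsilon>0$ and every nonempty set $O\in\tau|_C$ there exist $n\in\mathbb{N}$ and nonempty sets $O_1,\dots,O_n\in\tau|_C$ with $O_i\subset O$ for all $i$, such that $$\operatorname{diam}\Big(\sum_{i=1}^n\tfrac{1}{n}O_i\Big)<\varepsilon.$$
   Context: For $C\subset D$, $\tau|_C$ denotes the topology induced by $\tau$ on $C$. A topology is locally convex if it has a basis of convex open sets. $D$ is called $\tau$-strongly regular if for every bounded convex subset $C$ of $D$ and every $\varepsilon>0$ there is a convex combination $\sum_i\lambda_iU_i$ of nonempty $\tau|_C$-open sets $U_i$ with diameter less than $\varepsilon$. Sums of sets are Minkowski sums: $\sum_i\lambda_iU_i=\{\sum_i\lambda_iu_i: u_i\in U_i\}$. *)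

theory Defs
  imports "HOL-Analysis.Analysis"
begin

definition weak_topology :: "'a::real_normed_vector topology" where
  "weak_topology = topology_generated_by
     {f -` U | (f :: 'a \<Rightarrow> real) U. bounded_linear f \<and> open U}"

definition locally_convex_top :: "'a::real_vector topology \<Rightarrow> bool" where
  "locally_convex_top T \<longleftrightarrow>
     (\<forall>U x. openin T U \<and> x \<in> U \<longrightarrow> (\<exists>V. openin T V \<and> convex V \<and> x \<in> V \<and> V \<subseteq> U))"

definition msum :: "(nat \<Rightarrow> real) \<Rightarrow> (nat \<Rightarrow> 'a::real_vector set) \<Rightarrow> nat \<Rightarrow> 'a set" where
  "msum lam U n = {\<Sum>i<n. lam i *\<^sub>R u i | u. \<forall>i<n. u i \<in> U i}"

definition strongly_regular :: "'a::real_normed_vector topology \<Rightarrow> 'a set \<Rightarrow> bool" where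
  "strongly_regular T D \<longleftrightarrow>
     (\<forall>C \<epsilon>. C \<subseteq> D \<and> C \<noteq> {} \<and> bounded C \<and> convex C \<and> \<epsilon> > 0 \<longrightarrow>
        (\<exists>n lam U. n \<ge> 1 \<and> (\<forall>i<n. lam i \<ge> 0) \<and> (\<Sum>i<n. lam i) = 1 \<and>
           (\<forall>i<n. U i \<noteq> {} \<and> openin (subtopology T C) (U i)) \<and>
           diameter (msum lam U n) < \<epsilon>))"

end

theory Submission
  imports Defs
begin

text \<open>Shrink the given relatively open set to a convex relatively open piece of C, on which
  strong regularity yields a convex combination \<open>\<Sum> \<lambda>\<^sub>i U\<^sub>i\<close> of small diameter.
  Approximating the weights by fractions \<open>k\<^sub>i / K\<close> and listing each \<open>U\<^sub>i\<close> exactly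
  \<open>k\<^sub>i\<close> times gives an equal-weight combination, which lies in
  \<open>\<Sum> (k\<^sub>i / K) conv U\<^sub>i\<close>; passing to convex hulls does not change diameters, and
  changing the weights moves the diameter by at most \<open>\<Sum> |k\<^sub>i / K - \<lambda>\<^sub>i| diam U\<^sub>i\<close>.\<close>

lemma msum_eq_set_sum:
  "msum lam U m = (\<Sum>i<m. (\<lambda>x. lam i *\<^sub>R x) ` U i)"
proof -
  have "(\<exists>s. z = sum s {..<m} \<and> (\<forall>i\<in>{..<m}. s i \<in> (\<lambda>x. lam i *\<^sub>R x) ` U i))
      \<longleftrightarrow> (\<exists>u. z = (\<Sum>i<m. lam i *\<^sub>R u i) \<and> (\<forall>i<m. u i \<in> U i))" for z
  proof
    assume "\<exists>s. z = sum s {..<m} \<and> (\<forall>i\<in>{..<m}. s i \<in> (\<lambda>x. lam i *\<^sub>R x) ` U i)"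
    then obtain s where z: "z = sum s {..<m}"
      and "\<forall>i\<in>{..<m}. \<exists>v\<in>U i. s i = lam i *\<^sub>R v"
      by (auto simp: image_iff)
    then obtain u where "\<forall>i\<in>{..<m}. u i \<in> U i \<and> s i = lam i *\<^sub>R u i"
      using bchoice[of "{..<m}" "\<lambda>i v. v \<in> U i \<and> s i = lam i *\<^sub>R v"] by blast
    then show "\<exists>u. z = (\<Sum>i<m. lam i *\<^sub>R u i) \<and> (\<forall>i<m. u i \<in> U i)"
      unfolding z by (intro exI[of _ u]) (auto intro: sum.cong)
  next
    assume "\<exists>u. z = (\<Sum>i<m. lam i *\<^sub>R u i) \<and> (\<forall>i<m. u i \<in> U i)"
    then obtain u where "z = (\<Sum>i<m. lam i *\<^sub>R u i)" "\<forall>i<m. u i \<in> U i" by blast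
    then show "\<exists>s. z = sum s {..<m} \<and> (\<forall>i\<in>{..<m}. s i \<in> (\<lambda>x. lam i *\<^sub>R x) ` U i)"
      by (intro exI[of _ "\<lambda>i. lam i *\<^sub>R u i"]) auto
  qed
  then show ?thesis
    by (simp add: msum_def set_sum_alt)
qed

lemma bounded_set_sum:
  fixes B :: "'i \<Rightarrow> 'a::real_normed_vector set"
  assumes "\<forall>i\<in>A. bounded (B i)"
  shows "bounded (\<Sum>i\<in>A. B i)"
  using assms
proof (induction A rule: infinite_finite_induct)
  case (insert i A)
  then show ?case by (simp add: set_plus_image bounded_plus)
qed auto

lemma bounded_msum:
  fixes U :: "nat \<Rightarrow> 'a::real_normed_vector set"
  assumes "\<forall>i<m. bounded (U i)"
  shows "bounded (msum lam U m)"
  unfolding msum_eq_set_sum using assms by (auto intro: bounded_set_sum bounded_scaling)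

lemma convex_hull_msum:
  "convex hull (msum lam U m) = msum lam (\<lambda>i. convex hull (U i)) m"
  by (simp add: msum_eq_set_sum convex_hull_set_sum convex_hull_scaling)

lemma diameter_convex_hull:
  fixes S :: "'a::real_normed_vector set"
  assumes "bounded S"
  shows "diameter (convex hull S) = diameter S"
proof (rule antisym)
  let ?d = "diameter S"
  have "convex hull S \<subseteq> cball p ?d" if "p \<in> convex hull S" for p
  proof (rule hull_minimal)
    show "S \<subseteq> cball p ?d"
    proof
      fix s assume "s \<in> S"
      have "convex hull S \<subseteq> cball s ?d"
        using diameter_bounded_bound[OF assms \<open>s \<in> S\<close>] by (intro hull_minimal) auto
      then show "s \<in> cball p ?d" using that by (auto simp: dist_commute)
    qed
  qed (rule convex_cball)
  then show "diameter (convex hull S) \<le> ?d"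
    by (intro diameter_le) (auto simp: diameter_ge_0 assms subset_iff simp flip: dist_norm)
  show "?d \<le> diameter (convex hull S)"
    by (intro diameter_subset hull_subset bounded_convex_hull assms)
qed

lemma diameter_msum_reweight:
  fixes U :: "nat \<Rightarrow> 'a::real_normed_vector set"
  assumes bounded: "\<forall>i<m. bounded (U i)"
  shows "diameter (msum mu U m)
    \<le> diameter (msum lam U m) + (\<Sum>i<m. \<bar>mu i - lam i\<bar> * diameter (U i))"
proof (rule diameter_le)
  let ?err = "\<Sum>i<m. \<bar>mu i - lam i\<bar> * diameter (U i)"
  have "0 \<le> ?err"
    using bounded by (intro sum_nonneg mult_nonneg_nonneg diameter_ge_0) auto
  then show "msum mu U m \<noteq> {} \<or> 0 \<le> diameter (msum lam U m) + ?err"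
    using bounded by (simp add: bounded_msum diameter_ge_0)
  fix x y assume "x \<in> msum mu U m" "y \<in> msum mu U m"
  then obtain a b where a: "\<forall>i<m. a i \<in> U i" and b: "\<forall>i<m. b i \<in> U i"
    and x: "x = (\<Sum>i<m. mu i *\<^sub>R a i)" and y: "y = (\<Sum>i<m. mu i *\<^sub>R b i)"
    unfolding msum_def by blast
  let ?xl = "\<Sum>i<m. lam i *\<^sub>R a i" and ?yl = "\<Sum>i<m. lam i *\<^sub>R b i"
  let ?shift = "\<Sum>i<m. (mu i - lam i) *\<^sub>R (a i - b i)"
  have "x - y = (?xl - ?yl) + ?shift"
    unfolding x y
    by (simp add: sum_subtractf sum.distrib scaleR_diff_left scaleR_diff_right algebra_simps)
  then have "norm (x - y) \<le> norm (?xl - ?yl) + norm ?shift"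
    by (simp only: norm_triangle_ineq)
  moreover have "?xl \<in> msum lam U m" "?yl \<in> msum lam U m"
    using a b unfolding msum_def by blast+
  then have "norm (?xl - ?yl) \<le> diameter (msum lam U m)"
    using diameter_bounded_bound[OF bounded_msum[OF bounded]] by (simp add: dist_norm)
  moreover have "norm ?shift \<le> ?err"
  proof (rule order_trans[OF norm_sum sum_mono])
    fix i assume "i \<in> {..<m}"
    then have "norm (a i - b i) \<le> diameter (U i)"
      using diameter_bounded_bound[of "U i" "a i" "b i"] a b bounded by (simp add: dist_norm)
    then show "norm ((mu i - lam i) *\<^sub>R (a i - b i)) \<le> \<bar>mu i - lam i\<bar> * diameter (U i)"
      by (simp add: mult_left_mono)
  qed
  ultimately show "norm (x - y) \<le> diameter (msum lam U m) + ?err"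
    by linarith
qed

lemma msum_repeated_subset:
  fixes U :: "nat \<Rightarrow> 'a::real_normed_vector set"
  assumes \<sigma>: "\<forall>j<K. \<sigma> j < m" and fibres: "\<forall>i<m. card {j. j < K \<and> \<sigma> j = i} = k i"
    and nonempty: "\<forall>i<m. U i \<noteq> {}"
  shows "msum (\<lambda>_. 1 / real K) (\<lambda>j. U (\<sigma> j)) K
    \<subseteq> msum (\<lambda>i. real (k i) / real K) (\<lambda>i. convex hull (U i)) m"
proof
  fix z assume "z \<in> msum (\<lambda>_. 1 / real K) (\<lambda>j. U (\<sigma> j)) K"
  then obtain u where u: "\<forall>j<K. u j \<in> U (\<sigma> j)" and z: "z = (\<Sum>j<K. (1 / real K) *\<^sub>R u j)"
    unfolding msum_def by blast
  define F where "F i = {j. j < K \<and> \<sigma> j = i}" for i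
  define a where "a i = (if k i = 0 then (SOME v. v \<in> U i)
    else (\<Sum>j\<in>F i. (1 / real (k i)) *\<^sub>R u j))" for i
  have a_hull: "a i \<in> convex hull (U i)" if "i < m" for i
  proof (cases "k i = 0")
    case True
    then show ?thesis
      using nonempty that by (simp add: a_def) (metis hull_inc some_in_eq)
  next
    case False
    have "(\<Sum>j\<in>F i. (1 / real (k i)) *\<^sub>R u j) \<in> convex hull (U i)"
    proof (rule convex_sum[OF _ convex_convex_hull])
      show "(\<Sum>j\<in>F i. 1 / real (k i)) = 1"
        using fibres that False by (simp add: F_def)
      show "\<And>j. j \<in> F i \<Longrightarrow> u j \<in> convex hull U i"
        using u by (auto simp: F_def intro: hull_inc)
    qed (auto simp: F_def)
    then show ?thesis using False by (simp add: a_def)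
  qed
  have block: "(\<Sum>j\<in>F i. (1 / real K) *\<^sub>R u j) = (real (k i) / real K) *\<^sub>R a i" if "i < m" for i
  proof (cases "k i = 0")
    case True
    moreover have "finite (F i)" by (simp add: F_def)
    ultimately have "F i = {}" using fibres that by (metis F_def card_0_eq)
    then show ?thesis using True by simp
  next
    case False
    then show ?thesis by (simp add: a_def scaleR_sum_right)
  qed
  have "z = (\<Sum>i<m. \<Sum>j\<in>F i. (1 / real K) *\<^sub>R u j)"
    unfolding z using sum.group[of "{..<K}" "{..<m}" \<sigma> "\<lambda>j. (1 / real K) *\<^sub>R u j"] \<sigma>
    by (force simp: F_def image_subset_iff)
  also have "\<dots> = (\<Sum>i<m. (real (k i) / real K) *\<^sub>R a i)"
    using block by simp
  finally show "z \<in> msum (\<lambda>i. real (k i) / real K) (\<lambda>i. convex hull (U i)) m"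
    using a_hull unfolding msum_def by blast
qed

lemma exists_map_with_fibre_cards:
  "\<exists>\<sigma>::nat \<Rightarrow> nat. (\<forall>j<(\<Sum>i<m. k i). \<sigma> j < m) \<and>
      (\<forall>i<m. card {j. j < (\<Sum>i<m. k i) \<and> \<sigma> j = i} = k i)"
proof (induction m)
  case (Suc m)
  then obtain \<sigma> where \<sigma>: "\<forall>j<(\<Sum>i<m. k i). \<sigma> j < m"
    and fibres: "\<forall>i<m. card {j. j < (\<Sum>i<m. k i) \<and> \<sigma> j = i} = k i" by blast
  define S where "S = (\<Sum>i<m. k i)"
  define \<sigma>' where "\<sigma>' j = (if j < S then \<sigma> j else m)" for j
  have "card {j. j < S + k m \<and> \<sigma>' j = i} = k i" if "i < Suc m" for i
  proof (cases "i = m")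
    case True
    then have "{j. j < S + k m \<and> \<sigma>' j = i} = {S..<S + k m}"
      using \<sigma> by (auto simp: \<sigma>'_def S_def not_less)
    then show ?thesis using True by simp
  next
    case False
    then have "{j. j < S + k m \<and> \<sigma>' j = i} = {j. j < S \<and> \<sigma> j = i}"
      by (auto simp: \<sigma>'_def)
    then show ?thesis using fibres False that by (simp add: S_def)
  qed
  moreover have "\<forall>j<S + k m. \<sigma>' j < Suc m"
    using \<sigma> by (auto simp: \<sigma>'_def S_def)
  ultimately show ?case by (auto simp: S_def)
qed simp

lemma weights_approx_by_fractions:
  fixes lam :: "nat \<Rightarrow> real" and k :: "nat \<Rightarrow> nat"
  assumes sum1: "(\<Sum>i<m. lam i) = 1" and "m < N"
    and k_le: "\<And>i. i < m \<Longrightarrow> real (k i) \<le> real N * lam i"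
    and k_gt: "\<And>i. i < m \<Longrightarrow> real N * lam i - 1 < real (k i)"
  defines "K \<equiv> \<Sum>i<m. k i"
  shows "1 \<le> K \<and> (\<Sum>i<m. \<bar>real (k i) / real K - lam i\<bar>) \<le> 2 * real m / real N"
proof -
  have "m \<noteq> 0" using sum1 by (metis lessThan_0 sum.empty zero_neq_one)
  have N_pos: "0 < real N" using \<open>m < N\<close> by simp
  have K_eq: "real K = (\<Sum>i<m. real (k i))" by (simp add: K_def)
  have "real N - real m = (\<Sum>i<m. real N * lam i - 1)"
    using sum1 by (simp add: sum_subtractf sum_distrib_left[symmetric])
  also have "\<dots> < real K"
    unfolding K_eq using k_gt \<open>m \<noteq> 0\<close> by (intro sum_strict_mono) auto
  finally have K_gt: "real N - real m < real K" .
  have "real K \<le> (\<Sum>i<m. real N * lam i)"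
    unfolding K_eq using k_le by (intro sum_mono) auto
  then have K_le: "real K \<le> real N" using sum1 by (simp add: sum_distrib_left[symmetric])
  have K_pos: "0 < real K" using K_gt \<open>m < N\<close> by linarith
  have "\<bar>real (k i) / real K - lam i\<bar>
      \<le> (real (k i) / real K - real (k i) / real N) + (lam i - real (k i) / real N)"
    if "i < m" for i
  proof -
    have "real (k i) / real N \<le> real (k i) / real K"
      using K_le K_pos by (intro divide_left_mono) auto
    moreover have "real (k i) / real N \<le> lam i"
      using k_le[OF that] N_pos by (simp add: divide_le_eq mult.commute)
    ultimately show ?thesis by linarith
  qed
  then have "(\<Sum>i<m. \<bar>real (k i) / real K - lam i\<bar>)
      \<le> (\<Sum>i<m. (real (k i) / real K - real (k i) / real N) + (lam i - real (k i) / real N))"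
    by (intro sum_mono) auto
  also have "\<dots> = real K / real K - real K / real N + 1 - real K / real N"
    using sum1 unfolding K_eq
    by (simp add: sum.distrib sum_subtractf sum_divide_distrib[symmetric] sum_distrib_left[symmetric])
  also have "\<dots> = 2 * (real N - real K) / real N"
    using K_pos N_pos by (simp add: field_simps)
  also have "\<dots> \<le> 2 * real m / real N"
    using K_gt N_pos by (intro divide_right_mono) auto
  finally show ?thesis using K_pos by simp
qed

lemma equal_weights_combination:
  fixes U :: "nat \<Rightarrow> 'a::real_normed_vector set"
  assumes nonneg: "\<forall>i<m. 0 \<le> lam i" and sum1: "(\<Sum>i<m. lam i) = 1"
    and sets: "\<forall>i<m. U i \<noteq> {} \<and> U i \<subseteq> S" and "bounded S"
    and small: "diameter (msum lam U m) < \<epsilon>"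
  shows "\<exists>K \<sigma>. 1 \<le> K \<and> (\<forall>j<K. \<sigma> j < m) \<and>
    diameter (msum (\<lambda>_. 1 / real K) (\<lambda>j. U (\<sigma> j)) K) < \<epsilon>"
proof -
  define \<delta> where "\<delta> = \<epsilon> - diameter (msum lam U m)"
  define N where "N = nat \<lceil>2 * diameter S * real m / \<delta>\<rceil> + m + 1"
  have "0 < \<delta>" using small by (simp add: \<delta>_def)
  have "m < N" by (simp add: N_def)
  have "2 * diameter S * real m / \<delta> < real N" by (simp add: N_def) linarith
  then have N_large: "2 * real m / real N * diameter S < \<delta>"
    using \<open>0 < \<delta>\<close> \<open>m < N\<close> by (simp add: field_simps)
  define k where "k i = nat \<lfloor>real N * lam i\<rfloor>" for i
  define K where "K = (\<Sum>i<m. k i)"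
  have "1 \<le> K" and err: "(\<Sum>i<m. \<bar>real (k i) / real K - lam i\<bar>) \<le> 2 * real m / real N"
    using weights_approx_by_fractions[OF sum1 \<open>m < N\<close>, of k] nonneg
    by (auto simp: K_def k_def)
  obtain \<sigma> where \<sigma>: "\<forall>j<K. \<sigma> j < m" and fibres: "\<forall>i<m. card {j. j < K \<and> \<sigma> j = i} = k i"
    using exists_map_with_fibre_cards[of k m] unfolding K_def by blast
  have bounded_U: "\<forall>i<m. bounded (U i)" using sets \<open>bounded S\<close> by (auto intro: bounded_subset)
  have "diameter (msum (\<lambda>_. 1 / real K) (\<lambda>j. U (\<sigma> j)) K)
      \<le> diameter (msum (\<lambda>i. real (k i) / real K) (\<lambda>i. convex hull (U i)) m)"
    using msum_repeated_subset[OF \<sigma> fibres] sets bounded_U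
    by (intro diameter_subset bounded_msum) (auto simp: bounded_convex_hull)
  also have "\<dots> \<le> diameter (msum lam (\<lambda>i. convex hull (U i)) m)
      + (\<Sum>i<m. \<bar>real (k i) / real K - lam i\<bar> * diameter (convex hull (U i)))"
    using bounded_U by (intro diameter_msum_reweight) (auto simp: bounded_convex_hull)
  also have "\<dots> = diameter (msum lam U m)
      + (\<Sum>i<m. \<bar>real (k i) / real K - lam i\<bar> * diameter (U i))"
    using bounded_U
    by (simp add: convex_hull_msum[symmetric] diameter_convex_hull bounded_msum)
  also have "\<dots> \<le> diameter (msum lam U m) + 2 * real m / real N * diameter S"
  proof -
    have "(\<Sum>i<m. \<bar>real (k i) / real K - lam i\<bar> * diameter (U i))
        \<le> (\<Sum>i<m. \<bar>real (k i) / real K - lam i\<bar> * diameter S)"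
      using sets \<open>bounded S\<close> by (intro sum_mono mult_left_mono diameter_subset) auto
    also have "\<dots> = (\<Sum>i<m. \<bar>real (k i) / real K - lam i\<bar>) * diameter S"
      by (simp add: sum_distrib_right)
    also have "\<dots> \<le> 2 * real m / real N * diameter S"
      using err \<open>bounded S\<close> by (intro mult_right_mono diameter_ge_0)
    finally show ?thesis by simp
  qed
  also have "\<dots> < \<epsilon>" using N_large by (simp add: \<delta>_def)
  finally show ?thesis using \<open>1 \<le> K\<close> \<sigma> by blast
qed

lemma strongly_regular_localized:
  fixes D C W :: "'a::real_normed_vector set" and \<tau> :: "'a topology"
  assumes top: "topspace \<tau> = D" and lc: "locally_convex_top \<tau>"
    and reg: "strongly_regular \<tau> D" and "bounded D" and "convex C" and "C \<subseteq> D"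
    and "W \<noteq> {}" and W: "openin (subtopology \<tau> C) W" and "0 < \<epsilon>"
  shows "\<exists>m lam U. (\<forall>i<m. 0 \<le> lam i) \<and> (\<Sum>i<m. lam i) = 1 \<and>
    (\<forall>i<m. U i \<noteq> {} \<and> openin (subtopology \<tau> C) (U i) \<and> U i \<subseteq> W) \<and>
    diameter (msum lam U m) < \<epsilon>"
proof -
  obtain V where "openin \<tau> V" and W_eq: "W = V \<inter> C"
    using W by (auto simp: openin_subtopology)
  obtain x where "x \<in> W" using \<open>W \<noteq> {}\<close> by blast
  then have "x \<in> V" using W_eq by blast
  then obtain V' where V': "openin \<tau> V'" "convex V'" "x \<in> V'" "V' \<subseteq> V"
    using lc \<open>openin \<tau> V\<close> unfolding locally_convex_top_def by blast
  define C' where "C' = V' \<inter> C"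
  have "C' \<subseteq> D" using openin_subset[OF V'(1)] top by (auto simp: C'_def)
  moreover have "C' \<noteq> {}" using V'(3) \<open>x \<in> W\<close> W_eq by (auto simp: C'_def)
  moreover have "bounded C'" using \<open>bounded D\<close> \<open>C' \<subseteq> D\<close> by (rule bounded_subset)
  moreover have "convex C'" using V'(2) \<open>convex C\<close> by (simp add: C'_def convex_Int)
  ultimately obtain m lam U where "\<forall>i<m. 0 \<le> lam i" "(\<Sum>i<m. lam i) = 1"
    and U: "\<forall>i<m. U i \<noteq> {} \<and> openin (subtopology \<tau> C') (U i)"
    and "diameter (msum lam U m) < \<epsilon>"
    using reg[unfolded strongly_regular_def, rule_format, of C' \<epsilon>] \<open>0 < \<epsilon>\<close> by blast
  have C'_open: "openin (subtopology \<tau> C) C'"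
    unfolding C'_def using V'(1) by (rule openin_subtopology_Int)
  have "openin (subtopology \<tau> C) (U i) \<and> U i \<subseteq> W" if "i < m" for i
  proof
    have "openin (subtopology (subtopology \<tau> C) C') (U i)"
      using U that by (simp add: subtopology_subtopology Int_absorb1 C'_def)
    then show "openin (subtopology \<tau> C) (U i)" using C'_open by (rule openin_trans_full)
    have "U i \<subseteq> C'" using openin_subset[of "subtopology \<tau> C'" "U i"] U that by auto
    then show "U i \<subseteq> W" using V'(4) W_eq by (auto simp: C'_def)
  qed
  with \<open>\<forall>i<m. 0 \<le> lam i\<close> \<open>(\<Sum>i<m. lam i) = 1\<close> U \<open>diameter (msum lam U m) < \<epsilon>\<close>
  show ?thesis by (intro exI[of _ m] exI[of _ lam] exI[of _ U]) blast
qed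

theorem lemma2p2:
  fixes D C :: "'a::banach set" and \<tau> :: "'a topology"
  assumes "closed D" and "bounded D" and "convex D"
    and "topspace \<tau> = D"
    and "locally_convex_top \<tau>"
    and "\<And>U. openin (subtopology weak_topology D) U \<Longrightarrow> openin \<tau> U"
    and "strongly_regular \<tau> D"
    and "C \<noteq> {}" and "convex C" and "C \<subseteq> D"
  shows "\<forall>\<epsilon>>0. \<forall>W. W \<noteq> {} \<and> openin (subtopology \<tau> C) W \<longrightarrow>
           (\<exists>n::nat. \<exists>Os. n \<ge> 1 \<and>
              (\<forall>i<n. Os i \<noteq> {} \<and> openin (subtopology \<tau> C) (Os i) \<and> Os i \<subseteq> W) \<and>
              diameter (msum (\<lambda>_. 1 / real n) Os n) < \<epsilon>)"
proof (intro allI impI)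
  fix \<epsilon> :: real and W
  assume "0 < \<epsilon>" and W: "W \<noteq> {} \<and> openin (subtopology \<tau> C) W"
  obtain m lam U where weights: "\<forall>i<m. 0 \<le> lam i" "(\<Sum>i<m. lam i) = 1"
    and U: "\<forall>i<m. U i \<noteq> {} \<and> openin (subtopology \<tau> C) (U i) \<and> U i \<subseteq> W"
    and small: "diameter (msum lam U m) < \<epsilon>"
    using strongly_regular_localized[OF assms(4,5,7,2,9,10) conjunct1[OF W] conjunct2[OF W]
        \<open>0 < \<epsilon>\<close>]
    by blast
  have "\<forall>i<m. U i \<noteq> {} \<and> U i \<subseteq> D"
    using U openin_subset \<open>C \<subseteq> D\<close> by fastforce
  then obtain K \<sigma> where "1 \<le> K" "\<forall>j<K. \<sigma> j < m"
    and "diameter (msum (\<lambda>_. 1 / real K) (\<lambda>j. U (\<sigma> j)) K) < \<epsilon>"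
    using equal_weights_combination[OF weights _ \<open>bounded D\<close> small] by meson
  with U show "\<exists>n::nat. \<exists>Os. n \<ge> 1 \<and>
      (\<forall>i<n. Os i \<noteq> {} \<and> openin (subtopology \<tau> C) (Os i) \<and> Os i \<subseteq> W) \<and>
      diameter (msum (\<lambda>_. 1 / real n) Os n) < \<epsilon>"
    by (intro exI[of _ K] exI[of _ "\<lambda>j. U (\<sigma> j)"]) simp
qed

end
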